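(* Let $(S_1,S_2,P)$ be a $\Gamma_3$-contraction. Then for $i=1,2$, all $\alpha\in\overline{\mathbb D}$ and all $k\ge3$, $\Phi_{ik}(\alpha S_1,\alpha^2S_2,\alpha^3P)\ge0$.
   Context: $\Gamma_3=\{(z_1+z_2+z_3,\,z_1z_2+z_2z_3+z_3z_1,\,z_1z_2z_3):|z_i|\le1\}$. A $\Gamma_3$-contraction is a commuting operator triple with Taylor joint spectrum in $\Gamma_3$ and $\|f(S_1,S_2,P)\|\le\sup_{\Gamma_3}|f|$ for rational $f$ with poles off $\Gamma_3$. For a commuting triple and $k\ge3$: $\Phi_{1k}(S_1,S_2,P)=(k-S_1)^*(k-S_1)-(kP-S_2)^*(kP-S_2)$, $\Phi_{2k}(S_1,S_2,P)=(k-S_2)^*(k-S_2)-(kP-S_1)^*(kP-S_1)$. *)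

theory Defs
  imports "HOL-Analysis.Analysis"
begin

class complex_hilbert = banach +
  fixes scaleC :: "complex \<Rightarrow> 'a \<Rightarrow> 'a"
    and cinner :: "'a \<Rightarrow> 'a \<Rightarrow> complex"
  assumes scaleC_add_right: "scaleC a (x + y) = scaleC a x + scaleC a y"
    and scaleC_add_left: "scaleC (a + b) x = scaleC a x + scaleC b x"
    and scaleC_scaleC: "scaleC a (scaleC b x) = scaleC (a * b) x"
    and scaleC_one: "scaleC 1 x = x"
    and scaleC_of_real: "scaleC (of_real r) x = scaleR r x"
    and cinner_add_left: "cinner (x + y) z = cinner x z + cinner y z"
    and cinner_scaleC_left: "cinner (scaleC a x) y = cnj a * cinner x y"
    and cinner_commute: "cinner y x = cnj (cinner x y)"
    and cinner_self_norm: "cinner x x = complex_of_real ((norm x)\<^sup>2)"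

definition bounded_op :: "('a::complex_hilbert \<Rightarrow> 'a) \<Rightarrow> bool" where
  "bounded_op T \<longleftrightarrow> bounded_linear T \<and> (\<forall>c x. T (scaleC c x) = scaleC c (T x))"

text \<open>Hilbert-space adjoint (exists uniquely for bounded operators by Riesz).\<close>
definition adj :: "('a::complex_hilbert \<Rightarrow> 'a) \<Rightarrow> ('a \<Rightarrow> 'a)" where
  "adj T = (SOME S. \<forall>x y. cinner (T x) y = cinner x (S y))"

definition positive_op :: "('a::complex_hilbert \<Rightarrow> 'a) \<Rightarrow> bool" where
  "positive_op A \<longleftrightarrow> (\<forall>x. cinner x (A x) \<in> \<real> \<and> 0 \<le> Re (cinner x (A x)))"

definition commuting3 :: "('a \<Rightarrow> 'a) \<Rightarrow> ('a \<Rightarrow> 'a) \<Rightarrow> ('a \<Rightarrow> 'a) \<Rightarrow> bool" where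
  "commuting3 A B C \<longleftrightarrow> A \<circ> B = B \<circ> A \<and> A \<circ> C = C \<circ> A \<and> B \<circ> C = C \<circ> B"

definition koszul_d1 :: "('a::complex_hilbert \<Rightarrow> 'a) \<Rightarrow> ('a \<Rightarrow> 'a) \<Rightarrow> ('a \<Rightarrow> 'a)
    \<Rightarrow> 'a \<Rightarrow> 'a \<times> 'a \<times> 'a" where
  "koszul_d1 A B C x = (A x, B x, C x)"

definition koszul_d2 :: "('a::complex_hilbert \<Rightarrow> 'a) \<Rightarrow> ('a \<Rightarrow> 'a) \<Rightarrow> ('a \<Rightarrow> 'a)
    \<Rightarrow> 'a \<times> 'a \<times> 'a \<Rightarrow> 'a \<times> 'a \<times> 'a" where
  "koszul_d2 A B C v = (case v of (x1, x2, x3) \<Rightarrow>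
      (A x2 - B x1, A x3 - C x1, B x3 - C x2))"

definition koszul_d3 :: "('a::complex_hilbert \<Rightarrow> 'a) \<Rightarrow> ('a \<Rightarrow> 'a) \<Rightarrow> ('a \<Rightarrow> 'a)
    \<Rightarrow> 'a \<times> 'a \<times> 'a \<Rightarrow> 'a" where
  "koszul_d3 A B C v = (case v of (y12, y13, y23) \<Rightarrow> A y23 - B y13 + C y12)"

definition koszul_exact :: "('a::complex_hilbert \<Rightarrow> 'a) \<Rightarrow> ('a \<Rightarrow> 'a) \<Rightarrow> ('a \<Rightarrow> 'a) \<Rightarrow> bool" where
  "koszul_exact A B C \<longleftrightarrow>
     inj (koszul_d1 A B C)
   \<and> {v. koszul_d2 A B C v = 0} = range (koszul_d1 A B C)
   \<and> {v. koszul_d3 A B C v = 0} = range (koszul_d2 A B C)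
   \<and> surj (koszul_d3 A B C)"

definition shift_op :: "('a::complex_hilbert \<Rightarrow> 'a) \<Rightarrow> complex \<Rightarrow> 'a \<Rightarrow> 'a" where
  "shift_op T lam x = T x - scaleC lam x"

definition taylor_spectrum :: "('a::complex_hilbert \<Rightarrow> 'a) \<Rightarrow> ('a \<Rightarrow> 'a) \<Rightarrow> ('a \<Rightarrow> 'a)
    \<Rightarrow> (complex \<times> complex \<times> complex) set" where
  "taylor_spectrum A B C =
     {(l1, l2, l3). \<not> koszul_exact (shift_op A l1) (shift_op B l2) (shift_op C l3)}"

definition Gamma3 :: "(complex \<times> complex \<times> complex) set" where
  "Gamma3 = {(z1 + z2 + z3, z1 * z2 + z2 * z3 + z3 * z1, z1 * z2 * z3) | z1 z2 z3.
               cmod z1 \<le> 1 \<and> cmod z2 \<le> 1 \<and> cmod z3 \<le> 1}"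

text \<open>Polynomials in three complex variables, given by a coefficient function and a
degree bound \<open>N\<close> (every polynomial in three variables arises this way).\<close>

definition poly3 :: "(nat \<Rightarrow> nat \<Rightarrow> nat \<Rightarrow> complex) \<Rightarrow> nat
    \<Rightarrow> complex \<times> complex \<times> complex \<Rightarrow> complex" where
  "poly3 c N z = (case z of (z1, z2, z3) \<Rightarrow>
      (\<Sum>i\<le>N. \<Sum>j\<le>N. \<Sum>l\<le>N. c i j l * z1 ^ i * z2 ^ j * z3 ^ l))"

definition poly3_op :: "(nat \<Rightarrow> nat \<Rightarrow> nat \<Rightarrow> complex) \<Rightarrow> nat
    \<Rightarrow> ('a::complex_hilbert \<Rightarrow> 'a) \<Rightarrow> ('a \<Rightarrow> 'a) \<Rightarrow> ('a \<Rightarrow> 'a) \<Rightarrow> 'a \<Rightarrow> 'a" where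
  "poly3_op c N A B C x =
      (\<Sum>i\<le>N. \<Sum>j\<le>N. \<Sum>l\<le>N. scaleC (c i j l) ((A ^^ i) ((B ^^ j) ((C ^^ l) x))))"

text \<open>A rational function with poles off Gamma_3 is \<open>p/q\<close> with \<open>q\<close> nonvanishing on
Gamma_3; its value at the triple is \<open>p(S_1,S_2,P) q(S_1,S_2,P)^{-1}\<close> (the inverse
exists by the spectral mapping theorem since the Taylor spectrum lies in Gamma_3).\<close>

definition gamma3_contraction :: "('a::complex_hilbert \<Rightarrow> 'a) \<Rightarrow> ('a \<Rightarrow> 'a) \<Rightarrow> ('a \<Rightarrow> 'a) \<Rightarrow> bool" where
  "gamma3_contraction S1 S2 P \<longleftrightarrow>
     bounded_op S1 \<and> bounded_op S2 \<and> bounded_op P \<and> commuting3 S1 S2 P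
   \<and> taylor_spectrum S1 S2 P \<subseteq> Gamma3
   \<and> (\<forall>p q N. (\<forall>z\<in>Gamma3. poly3 q N z \<noteq> 0) \<longrightarrow>
        onorm (poly3_op p N S1 S2 P \<circ> inv (poly3_op q N S1 S2 P))
          \<le> (SUP z\<in>Gamma3. cmod (poly3 p N z / poly3 q N z)))"

definition op_comb :: "complex \<Rightarrow> ('a::complex_hilbert \<Rightarrow> 'a) \<Rightarrow> ('a \<Rightarrow> 'a) \<Rightarrow> 'a \<Rightarrow> 'a" where
  "op_comb k T U x = scaleC k (T x) - U x"

definition Phi1 :: "real \<Rightarrow> ('a::complex_hilbert \<Rightarrow> 'a) \<Rightarrow> ('a \<Rightarrow> 'a) \<Rightarrow> ('a \<Rightarrow> 'a) \<Rightarrow> 'a \<Rightarrow> 'a" where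
  "Phi1 k S1 S2 P x =
     adj (op_comb (of_real k) id S1) (op_comb (of_real k) id S1 x)
   - adj (op_comb (of_real k) P S2) (op_comb (of_real k) P S2 x)"

definition Phi2 :: "real \<Rightarrow> ('a::complex_hilbert \<Rightarrow> 'a) \<Rightarrow> ('a \<Rightarrow> 'a) \<Rightarrow> ('a \<Rightarrow> 'a) \<Rightarrow> 'a \<Rightarrow> 'a" where
  "Phi2 k S1 S2 P x =
     adj (op_comb (of_real k) id S2) (op_comb (of_real k) id S2 x)
   - adj (op_comb (of_real k) P S1) (op_comb (of_real k) P S1 x)"

definition scale_op :: "complex \<Rightarrow> ('a::complex_hilbert \<Rightarrow> 'a) \<Rightarrow> 'a \<Rightarrow> 'a" where
  "scale_op a T x = scaleC a (T x)"

end

theory Submission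
  imports Defs "HOL-Complex_Analysis.Complex_Analysis"
begin

text \<open>For \<open>k > 3\<close> the scalar inequalities \<open>\<bar>k p - s\<^sub>2\<bar> \<le> \<bar>k - s\<^sub>1\<bar>\<close> and
  \<open>\<bar>k p - s\<^sub>1\<bar> \<le> \<bar>k - s\<^sub>2\<bar>\<close> hold on \<open>\<Gamma>\<^sub>3\<close>: in terms of \<open>z\<^sub>1, z\<^sub>2, z\<^sub>3\<close> both sides
  are affine in each \<open>z\<^sub>i\<close>, so by the maximum modulus principle it suffices to check the torus,
  where the two sides differ by a unimodular factor and a conjugation. Since \<open>\<Gamma>\<^sub>3\<close> is
  invariant under \<open>z\<^sub>i \<mapsto> \<alpha> z\<^sub>i\<close>, the same holds with \<open>(\<alpha> s\<^sub>1, \<alpha>\<^sup>2 s\<^sub>2, \<alpha>\<^sup>3 p)\<close>.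
  Multiplying \<open>k \<alpha>\<^sup>3 p - \<alpha>\<^sup>2 s\<^sub>2\<close> by a partial sum of the Neumann series of
  \<open>1 / (k - \<alpha> s\<^sub>1)\<close> gives polynomials of sup norm at most \<open>1 + (3\<bar>\<alpha>\<bar>/k)\<^sup>N\<^sup>+\<^sup>1\<close> on \<open>\<Gamma>\<^sub>3\<close>;
  the von Neumann inequality transfers these bounds to the operators, and letting \<open>N \<rightarrow> \<infinity>\<close>
  yields \<open>\<parallel>(k \<alpha>\<^sup>3 P - \<alpha>\<^sup>2 S\<^sub>2) x\<parallel> \<le> \<parallel>(k - \<alpha> S\<^sub>1) x\<parallel>\<close>, i.e. \<open>\<Phi>\<^sub>1\<^sub>k \<ge> 0\<close>;
  \<open>\<Phi>\<^sub>2\<^sub>k\<close> is symmetric, and \<open>k = 3\<close> follows by continuity in \<open>k\<close>.\<close>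

section \<open>Riesz representation and adjoints\<close>

lemma scaleC_zero_left [simp]: "scaleC 0 x = 0"
  using scaleC_of_real[of 0 x] by simp

lemma scaleC_zero_right [simp]: "scaleC a 0 = 0"
  using scaleC_add_right[of a 0 0] by simp

lemma scaleC_minus_right: "scaleC a (- x) = - scaleC a x"
  using scaleC_add_right[of a "- x" x] by (simp add: eq_neg_iff_add_eq_0)

lemma scaleC_diff_right: "scaleC a (x - y) = scaleC a x - scaleC a y"
  using scaleC_add_right[of a x "- y"] by (simp add: scaleC_minus_right)

lemma scaleC_minus_left: "scaleC (- a) x = - scaleC a x"
  using scaleC_add_left[of "- a" a x] by (simp add: eq_neg_iff_add_eq_0)

lemma scaleC_sum_right: "scaleC a (sum f A) = (\<Sum>i\<in>A. scaleC a (f i))"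
  by (induction A rule: infinite_finite_induct) (auto simp: scaleC_add_right)

lemma cinner_zero_left [simp]: "cinner 0 y = 0"
  using cinner_add_left[of 0 0 y] by simp

lemma cinner_zero_right [simp]: "cinner x 0 = 0"
  using cinner_commute[of 0 x] by simp

lemma cinner_add_right: "cinner x (y + z) = cinner x y + cinner x z"
  by (metis cinner_add_left cinner_commute complex_cnj_add)

lemma cinner_scaleC_right: "cinner x (scaleC a y) = a * cinner x y"
  by (metis cinner_commute cinner_scaleC_left complex_cnj_cnj complex_cnj_mult)

lemma cinner_diff_left: "cinner (x - y) z = cinner x z - cinner y z"
  using cinner_add_left[of "x - y" y z] by simp

lemma cinner_diff_right: "cinner x (y - z) = cinner x y - cinner x z"
  using cinner_add_right[of x "y - z" z] by simp

lemma cinner_self_norm': "(complex_of_real (norm x))\<^sup>2 = cinner x x"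
  by (simp add: cinner_self_norm)

lemma cnj_mult_self: "cnj z * z = (complex_of_real (cmod z))\<^sup>2"
  by (simp flip: complex_norm_square add: mult.commute)

lemma norm_scaleC: "norm (scaleC a x) = cmod a * norm x"
proof -
  have "complex_of_real ((norm (scaleC a x))\<^sup>2) = cnj a * a * complex_of_real ((norm x)\<^sup>2)"
    by (simp add: cinner_self_norm' cinner_scaleC_left cinner_scaleC_right)
  also have "cnj a * a = complex_of_real ((cmod a)\<^sup>2)"
    by (simp add: cnj_mult_self)
  finally have "(norm (scaleC a x))\<^sup>2 = (cmod a * norm x)\<^sup>2"
    by (metis of_real_eq_iff of_real_mult power_mult_distrib)
  then show ?thesis by (simp add: power2_eq_iff_nonneg)
qed

lemma parallelogram_law:
  fixes x y :: "'a::complex_hilbert"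
  shows "(norm (x + y))\<^sup>2 + (norm (x - y))\<^sup>2 = 2 * (norm x)\<^sup>2 + 2 * (norm y)\<^sup>2"
proof -
  have "complex_of_real ((norm (x + y))\<^sup>2 + (norm (x - y))\<^sup>2)
      = complex_of_real (2 * (norm x)\<^sup>2 + 2 * (norm y)\<^sup>2)"
    by (simp add: cinner_self_norm' cinner_add_left cinner_add_right cinner_diff_left cinner_diff_right)
  then show ?thesis by (simp only: of_real_eq_iff)
qed

lemma cinner_diff_scaleC_self:
  "cinner (v - scaleC t n) (v - scaleC t n)
     = cinner v v - t * cinner v n - cnj t * cnj (cinner v n) + cnj t * t * cinner n n"
  by (simp add: cinner_diff_left cinner_diff_right cinner_scaleC_left cinner_scaleC_right
      cinner_commute[of n v] algebra_simps)

lemma norm_diff_projection: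
  assumes "n \<noteq> 0"
  shows "(norm (v - scaleC (cnj (cinner v n) / (norm n)\<^sup>2) n))\<^sup>2
       = (norm v)\<^sup>2 - (cmod (cinner v n))\<^sup>2 / (norm n)\<^sup>2"
proof -
  define c where "c = cinner v n"
  define m where "m = (norm n)\<^sup>2"
  have m: "complex_of_real m \<noteq> 0" "cinner n n = complex_of_real m"
    using assms by (simp_all add: m_def cinner_self_norm)
  have "complex_of_real ((norm (v - scaleC (cnj c / m) n))\<^sup>2)
      = complex_of_real ((norm v)\<^sup>2) - 2 * (c * cnj c) / m + c * cnj c / m"
    unfolding cinner_self_norm[symmetric] cinner_diff_scaleC_self m(2) c_def[symmetric]
    using m(1) by (simp add: field_simps)
  also have "\<dots> = complex_of_real ((norm v)\<^sup>2 - (cmod c)\<^sup>2 / m)"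
    by (simp flip: complex_norm_square)
  finally show ?thesis by (simp only: of_real_eq_iff c_def m_def)
qed

lemma cauchy_schwarz: "cmod (cinner x y) \<le> norm x * norm y"
proof (cases "y = 0")
  case False
  have "0 \<le> (norm x)\<^sup>2 - (cmod (cinner x y))\<^sup>2 / (norm y)\<^sup>2"
    by (simp only: norm_diff_projection[OF False, symmetric] zero_le_power2)
  moreover have "(norm y)\<^sup>2 > 0" using False by simp
  ultimately have "(cmod (cinner x y))\<^sup>2 \<le> (norm x)\<^sup>2 * (norm y)\<^sup>2"
    by (simp add: field_simps)
  then show ?thesis
    by (metis norm_ge_zero power2_le_imp_le power_mult_distrib mult_nonneg_nonneg)
qed simp

lemma bounded_linear_cinner_right: "bounded_linear (cinner y)"
proof (rule bounded_linear_intro[where K = "norm y"])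
  show "cinner y (a + b) = cinner y a + cinner y b" for a b by (rule cinner_add_right)
  show "cinner y (scaleR r a) = scaleR r (cinner y a)" for r a
    by (simp flip: scaleC_of_real add: cinner_scaleC_right scaleR_conv_of_real)
  show "norm (cinner y a) \<le> norm a * norm y" for a
    using cauchy_schwarz[of y a] by (simp add: mult.commute)
qed

lemma Cauchy_if_norm_diff_sq_le:
  fixes s :: "nat \<Rightarrow> 'a::real_normed_vector"
  assumes "b \<longlonglongrightarrow> 0" and "\<And>i j. (norm (s i - s j))\<^sup>2 \<le> b i + b j"
  shows "Cauchy s"
proof (rule CauchyI)
  fix e :: real assume "0 < e"
  then obtain M where M: "\<And>n. M \<le> n \<Longrightarrow> b n < e\<^sup>2 / 2"
    using order_tendstoD(2)[OF assms(1), of "e\<^sup>2 / 2"] by (auto simp: eventually_sequentially)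
  have "norm (s m - s n) < e" if "M \<le> m" "M \<le> n" for m n
  proof -
    have "(norm (s m - s n))\<^sup>2 < e\<^sup>2"
      using assms(2)[of m n] M[OF that(1)] M[OF that(2)] by linarith
    then show ?thesis using \<open>0 < e\<close> by (simp add: power_less_imp_less_base)
  qed
  then show "\<exists>M. \<forall>m\<ge>M. \<forall>n\<ge>M. norm (s m - s n) < e" by blast
qed

text \<open>The minimising sequence is Cauchy by the parallelogram law applied to \<open>u - s i\<close>
  and \<open>u - s j\<close>, whose half-sum is \<open>u\<close> minus a point of the set.\<close>
lemma nearest_point_exists:
  fixes N :: "'a::complex_hilbert set"
  assumes "closed N" and "N \<noteq> {}"
    and midpoint: "\<And>a b. a \<in> N \<Longrightarrow> b \<in> N \<Longrightarrow> scaleR (1/2) (a + b) \<in> N"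
  shows "\<exists>n0\<in>N. \<forall>n\<in>N. norm (u - n0) \<le> norm (u - n)"
proof -
  define d where "d = (INF n\<in>N. (norm (u - n))\<^sup>2)"
  have d_le: "d \<le> (norm (u - n))\<^sup>2" if "n \<in> N" for n
    unfolding d_def using that by (intro cINF_lower bdd_belowI2[of _ 0]) auto
  have "\<exists>n\<in>N. (norm (u - n))\<^sup>2 < d + inverse (real (Suc j))" for j
  proof -
    have "d < d + inverse (real (Suc j))" by simp
    then show ?thesis
      unfolding d_def using assms(2)
      by (subst (asm) cINF_less_iff) (auto intro: bdd_belowI2[of _ 0])
  qed
  then obtain s where sN: "\<And>j. s j \<in> N"
    and sd: "\<And>j. (norm (u - s j))\<^sup>2 < d + inverse (real (Suc j))"
    by metis
  have "(norm (s i - s j))\<^sup>2 \<le> 2 * inverse (real (Suc i)) + 2 * inverse (real (Suc j))" for i j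
  proof -
    have "scaleR (1/2) ((u - s i) + (u - s j)) = scaleR (1/2) ((u + u) - (s i + s j))"
      by (simp add: algebra_simps)
    then have half: "u - scaleR (1/2) (s i + s j) = scaleR (1/2) ((u - s i) + (u - s j))"
      by (simp only: scaleR_diff_right scaleR_half_double)
    have "d \<le> (norm (scaleR (1/2) ((u - s i) + (u - s j))))\<^sup>2"
      using d_le[OF midpoint[OF sN[of i] sN[of j]]] by (simp only: half)
    then have "4 * d \<le> (norm ((u - s i) + (u - s j)))\<^sup>2"
      by (simp add: power_mult_distrib power_divide)
    moreover have "(norm ((u - s i) + (u - s j)))\<^sup>2 + (norm (s i - s j))\<^sup>2
        = 2 * (norm (u - s i))\<^sup>2 + 2 * (norm (u - s j))\<^sup>2"
      using parallelogram_law[of "u - s i" "u - s j"] by (simp add: norm_minus_commute)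
    ultimately show ?thesis using sd[of i] sd[of j] by linarith
  qed
  then have "Cauchy s"
    using tendsto_mult_right_zero[OF LIMSEQ_inverse_real_of_nat, of 2]
    by (rule Cauchy_if_norm_diff_sq_le[rotated])
  then obtain n0 where lim: "s \<longlonglongrightarrow> n0"
    using Cauchy_convergent convergent_def by blast
  have "n0 \<in> N"
    using closed_sequentially[OF \<open>closed N\<close>] sN lim by blast
  moreover have "(norm (u - n0))\<^sup>2 \<le> d"
  proof (rule tendsto_le[OF sequentially_bot])
    show "(\<lambda>j. d + inverse (real (Suc j))) \<longlonglongrightarrow> d"
      using LIMSEQ_inverse_real_of_nat_add[of d] by simp
    show "(\<lambda>j. (norm (u - s j))\<^sup>2) \<longlonglongrightarrow> (norm (u - n0))\<^sup>2"
      by (intro tendsto_intros lim)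
    show "\<forall>\<^sub>F j in sequentially. (norm (u - s j))\<^sup>2 \<le> d + inverse (real (Suc j))"
      using sd by (intro always_eventually allI less_imp_le)
  qed
  ultimately show ?thesis
    using d_le by (meson norm_ge_zero order_trans power2_le_imp_le)
qed

lemma nearest_point_orthogonal:
  assumes N: "\<And>c n. n \<in> N \<Longrightarrow> scaleC c n \<in> N"
    and min: "\<And>n. n \<in> N \<Longrightarrow> norm v \<le> norm (v - n)"
    and "n \<in> N"
  shows "cinner v n = 0"
proof (cases "n = 0")
  case False
  have "(norm v)\<^sup>2 \<le> (norm v)\<^sup>2 - (cmod (cinner v n))\<^sup>2 / (norm n)\<^sup>2"
    using min[OF N[OF \<open>n \<in> N\<close>]] norm_diff_projection[OF False, of v]
    by (metis norm_ge_zero power_mono)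
  then show ?thesis using False by (simp add: divide_le_0_iff)
qed simp

lemma orthogonal_decomposition:
  fixes N :: "'a::complex_hilbert set"
  assumes "closed N" and "0 \<in> N"
    and add: "\<And>a b. a \<in> N \<Longrightarrow> b \<in> N \<Longrightarrow> a + b \<in> N"
    and scale: "\<And>c n. n \<in> N \<Longrightarrow> scaleC c n \<in> N"
  shows "\<exists>n0\<in>N. \<forall>n\<in>N. cinner (u - n0) n = 0"
proof -
  have "scaleR (1/2) (a + b) \<in> N" if "a \<in> N" "b \<in> N" for a b
    using scale[OF add[OF that], of "of_real (1/2)"] by (simp only: scaleC_of_real)
  then obtain n0 where "n0 \<in> N" and n0: "\<And>n. n \<in> N \<Longrightarrow> norm (u - n0) \<le> norm (u - n)"
    using nearest_point_exists[of N u] assms(1,2) by blast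
  have "norm (u - n0) \<le> norm ((u - n0) - n)" if "n \<in> N" for n
    using n0[OF add[OF \<open>n0 \<in> N\<close> that]] by (simp add: algebra_simps)
  then show ?thesis
    using \<open>n0 \<in> N\<close> nearest_point_orthogonal[of N "u - n0"] scale by blast
qed

lemma riesz_representation:
  fixes f :: "'a::complex_hilbert \<Rightarrow> complex"
  assumes lin: "bounded_linear f" and hom: "\<And>c x. f (scaleC c x) = c * f x"
  shows "\<exists>z. \<forall>x. f x = cinner z x"
proof (cases "\<forall>x. f x = 0")
  case False
  then obtain u where "f u \<noteq> 0" by blast
  define N where "N = {x. f x = 0}"
  have f_linear: "f (x - y) = f x - f y" "f (x + y) = f x + f y" for x y
    using lin by (simp_all add: linear_diff linear_add bounded_linear.linear)
  have "closed N"
    unfolding N_def using lin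
    by (intro closed_Collect_eq) (auto intro: linear_continuous_on continuous_on_const)
  moreover have "0 \<in> N" using hom[of 0 0] by (simp add: N_def)
  ultimately obtain n0 where "n0 \<in> N" and orth: "\<And>n. n \<in> N \<Longrightarrow> cinner (u - n0) n = 0"
    using orthogonal_decomposition[of N u] by (auto simp: N_def f_linear hom)
  define v where "v = u - n0"
  have fv: "f v \<noteq> 0"
    using \<open>f u \<noteq> 0\<close> \<open>n0 \<in> N\<close> by (simp add: v_def f_linear N_def)
  then have vv: "cinner v v \<noteq> 0" using hom[of 0 0] by (auto simp: cinner_self_norm)
  show ?thesis
  proof (intro exI allI)
    fix x
    have "x - scaleC (f x / f v) v \<in> N"
      using fv by (simp add: N_def f_linear hom)
    then have "cinner v (x - scaleC (f x / f v) v) = 0" unfolding v_def by (rule orth)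
    then have "cinner v x = f x / f v * cinner v v"
      by (simp add: cinner_diff_right cinner_scaleC_right)
    then show "f x = cinner (scaleC (cnj (f v / cinner v v)) v) x"
      using fv vv by (simp add: cinner_scaleC_left field_simps)
  qed
qed (auto intro: exI[of _ 0])

lemma cinner_adj:
  assumes "bounded_op T"
  shows "cinner (T x) y = cinner x (adj T y)"
proof -
  have "\<exists>z. \<forall>x. cinner y (T x) = cinner z x" for y
  proof (rule riesz_representation)
    show "bounded_linear (\<lambda>x. cinner y (T x))"
      using assms bounded_linear_compose[OF bounded_linear_cinner_right]
      by (auto simp: bounded_op_def)
    show "cinner y (T (scaleC c x)) = c * cinner y (T x)" for c x
      using assms by (simp add: bounded_op_def cinner_scaleC_right)
  qed
  then obtain S where "\<And>y x. cinner y (T x) = cinner (S y) x" by metis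
  then have "\<exists>S. \<forall>x y. cinner (T x) y = cinner x (S y)"
    by (metis cinner_commute)
  from someI_ex[OF this] show ?thesis unfolding adj_def by blast
qed

lemma positive_op_adj_diff:
  assumes "bounded_op A" and "bounded_op B" and le: "\<And>x. norm (B x) \<le> norm (A x)"
  shows "positive_op (\<lambda>x. adj A (A x) - adj B (B x))"
  unfolding positive_op_def
proof
  fix x
  have "cinner x (adj A (A x) - adj B (B x)) = complex_of_real ((norm (A x))\<^sup>2 - (norm (B x))\<^sup>2)"
    by (simp add: cinner_diff_right cinner_self_norm
        flip: cinner_adj[OF \<open>bounded_op A\<close>] cinner_adj[OF \<open>bounded_op B\<close>])
  moreover have "(norm (B x))\<^sup>2 \<le> (norm (A x))\<^sup>2"
    using le[of x] by (simp add: power_mono)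
  ultimately show "cinner x (adj A (A x) - adj B (B x)) \<in> \<real> \<and> 0 \<le> Re (cinner x (adj A (A x) - adj B (B x)))"
    by simp
qed

lemma norm_op_comb_le_from_right:
  assumes "\<And>k'. k < k' \<Longrightarrow> norm (op_comb (of_real k') T U x) \<le> norm (op_comb (of_real k') T' U' x)"
  shows "norm (op_comb (of_real k) T U x) \<le> norm (op_comb (of_real k) T' U' x)"
proof -
  have op_comb_real: "op_comb (of_real t) V W x = scaleR t (V x) - W x" for t V W
    by (simp add: op_comb_def scaleC_of_real)
  show ?thesis
    unfolding op_comb_real
  proof (rule tendsto_le[OF trivial_limit_at_right_real])
    show "((\<lambda>t. norm (scaleR t (T' x) - U' x)) \<longlongrightarrow> norm (scaleR k (T' x) - U' x)) (at_right k)"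
      "((\<lambda>t. norm (scaleR t (T x) - U x)) \<longlongrightarrow> norm (scaleR k (T x) - U x)) (at_right k)"
      by (intro tendsto_intros)+
    show "\<forall>\<^sub>F t in at_right k. norm (scaleR t (T x) - U x) \<le> norm (scaleR t (T' x) - U' x)"
      using eventually_at_right_less[of k] by eventually_elim (use assms op_comb_real in metis)
  qed
qed

section \<open>A maximum principle on the polydisc\<close>

lemma norm_affine_le_on_closed_disc:
  fixes a b c d w :: complex
  assumes "cmod d < cmod c"
    and circle: "\<And>w. cmod w = 1 \<Longrightarrow> cmod (a * w - b) \<le> cmod (c - d * w)"
    and "cmod w \<le> 1"
  shows "cmod (a * w - b) \<le> cmod (c - d * w)"
proof -
  have nz: "c - d * z \<noteq> 0" if "cmod z \<le> 1" for z
  proof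
    assume "c - d * z = 0"
    then have "cmod c = cmod d * cmod z" by (simp add: norm_mult)
    also have "\<dots> \<le> cmod d" using that by (simp add: mult_left_le)
    finally show False using \<open>cmod d < cmod c\<close> by simp
  qed
  define g where "g z = (a * z - b) / (c - d * z)" for z
  have g_le: "cmod (g z) \<le> 1 \<longleftrightarrow> cmod (a * z - b) \<le> cmod (c - d * z)" if "cmod z \<le> 1" for z
    using nz[OF that] by (simp add: g_def norm_divide divide_le_eq_1)
  have "cmod (g w) \<le> 1"
  proof (cases "cmod w = 1")
    case False
    show ?thesis
    proof (rule maximum_modulus_frontier[of g "ball 0 1"])
      show "g holomorphic_on interior (ball 0 1)" "continuous_on (closure (ball 0 1)) g"
        unfolding g_def using nz by (auto intro!: holomorphic_intros continuous_intros simp: dist_norm)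
      show "cmod (g z) \<le> 1" if "z \<in> frontier (ball 0 1)" for z
        using that g_le circle by (simp add: dist_norm)
      show "w \<in> ball 0 1" using False \<open>cmod w \<le> 1\<close> by simp
    qed simp
  qed (use g_le circle in auto)
  then show ?thesis using g_le \<open>cmod w \<le> 1\<close> by blast
qed

lemma polydisc_from_torus:
  fixes Q :: "complex \<Rightarrow> complex \<Rightarrow> complex \<Rightarrow> bool"
  assumes swap: "\<And>a b c. Q a b c \<Longrightarrow> Q a c b"
    and rot: "\<And>a b c. Q a b c \<Longrightarrow> Q b c a"
    and torus: "\<And>a b c. cmod a = 1 \<Longrightarrow> cmod b = 1 \<Longrightarrow> cmod c = 1 \<Longrightarrow> Q a b c"
    and step: "\<And>a b c. cmod a \<le> 1 \<Longrightarrow> cmod b \<le> 1 \<Longrightarrow> cmod c \<le> 1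
                 \<Longrightarrow> (\<And>w. cmod w = 1 \<Longrightarrow> Q a b w) \<Longrightarrow> Q a b c"
    and "cmod a \<le> 1" "cmod b \<le> 1" "cmod c \<le> 1"
  shows "Q a b c"
proof -
  have one_free: "Q x y z" if "cmod x = 1" "cmod y = 1" "cmod z \<le> 1" for x y z
    using step[of x y z] torus that by simp
  have two_free: "Q x y z" if "cmod x = 1" "cmod y \<le> 1" "cmod z \<le> 1" for x y z
    using step[of x z y] that one_free swap by simp
  have "Q b c a"
    using step[of b c a] assms(5-7) two_free rot by simp
  then show ?thesis using rot by blast
qed

text \<open>At the point \<open>(z\<^sub>1 + z\<^sub>2 + z\<^sub>3, z\<^sub>1 z\<^sub>2 + z\<^sub>2 z\<^sub>3 + z\<^sub>3 z\<^sub>1, z\<^sub>1 z\<^sub>2 z\<^sub>3)\<close> of \<open>\<Gamma>\<^sub>3\<close>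
  these are the scalar forms of \<open>\<Phi>\<^sub>1\<^sub>k \<ge> 0\<close> and \<open>\<Phi>\<^sub>2\<^sub>k \<ge> 0\<close>.\<close>
definition phi1_ineq :: "real \<Rightarrow> complex \<Rightarrow> complex \<Rightarrow> complex \<Rightarrow> bool" where
  "phi1_ineq k z1 z2 z3 \<longleftrightarrow>
     cmod (of_real k * z1 * z2 * z3 - (z1 * z2 + z2 * z3 + z3 * z1)) \<le> cmod (of_real k - (z1 + z2 + z3))"

definition phi2_ineq :: "real \<Rightarrow> complex \<Rightarrow> complex \<Rightarrow> complex \<Rightarrow> bool" where
  "phi2_ineq k z1 z2 z3 \<longleftrightarrow>
     cmod (of_real k * z1 * z2 * z3 - (z1 + z2 + z3)) \<le> cmod (of_real k - (z1 * z2 + z2 * z3 + z3 * z1))"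

lemma inverse_unimodular: "cmod z = 1 \<Longrightarrow> inverse z = cnj z"
  by (simp add: inverse_eq_divide complex_div_cnj[of 1 z])

text \<open>On the torus \<open>cnj z = 1 / z\<close>, so the two sides of each inequality differ by the
  unimodular factor \<open>z1 z2 z3\<close> and a complex conjugation.\<close>
lemma phi1_ineq_torus:
  assumes "cmod a = 1" "cmod b = 1" "cmod c = 1"
  shows "phi1_ineq k a b c"
proof -
  have "of_real k * a * b * c - (a * b + b * c + c * a) = a * b * c * cnj (of_real k - (a + b + c))"
    using assms by (auto simp flip: inverse_unimodular simp: field_simps)
  then have "cmod (of_real k * a * b * c - (a * b + b * c + c * a)) = cmod (of_real k - (a + b + c))"
    using assms by (simp only: norm_mult complex_mod_cnj mult_1)
  then show ?thesis by (simp add: phi1_ineq_def)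
qed

lemma phi2_ineq_torus:
  assumes "cmod a = 1" "cmod b = 1" "cmod c = 1"
  shows "phi2_ineq k a b c"
proof -
  have "of_real k * a * b * c - (a + b + c) = a * b * c * cnj (of_real k - (a * b + b * c + c * a))"
    using assms by (auto simp flip: inverse_unimodular simp: field_simps)
  then have "cmod (of_real k * a * b * c - (a + b + c)) = cmod (of_real k - (a * b + b * c + c * a))"
    using assms by (simp only: norm_mult complex_mod_cnj mult_1)
  then show ?thesis by (simp add: phi2_ineq_def)
qed

lemma phi1_ineq_polydisc:
  assumes "k > 3" and "cmod a \<le> 1" "cmod b \<le> 1" "cmod c \<le> 1"
  shows "phi1_ineq k a b c"
proof (rule polydisc_from_torus[of "phi1_ineq k"])
  show "phi1_ineq k x z y" "phi1_ineq k y z x" if "phi1_ineq k x y z" for x y z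
    using that by (simp_all add: phi1_ineq_def algebra_simps)
  fix x y z :: complex
  assume x: "cmod x \<le> 1" and y: "cmod y \<le> 1" and "cmod z \<le> 1"
    and circle: "\<And>w. cmod w = 1 \<Longrightarrow> phi1_ineq k x y w"
  have "k \<le> cmod (of_real k - x - y) + cmod (x + y)"
    using norm_triangle_ineq[of "of_real k - x - y" "x + y"] \<open>k > 3\<close> by simp
  then have "cmod (1::complex) < cmod (of_real k - x - y)"
    using norm_triangle_ineq[of x y] x y \<open>k > 3\<close> by simp
  from norm_affine_le_on_closed_disc[OF this _ \<open>cmod z \<le> 1\<close>, of "of_real k * x * y - x - y" "x * y"]
  show "phi1_ineq k x y z"
    using circle by (simp add: phi1_ineq_def algebra_simps)
qed (use assms phi1_ineq_torus in auto)

lemma phi2_ineq_polydisc: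
  assumes "k > 3" and "cmod a \<le> 1" "cmod b \<le> 1" "cmod c \<le> 1"
  shows "phi2_ineq k a b c"
proof (rule polydisc_from_torus[of "phi2_ineq k"])
  show "phi2_ineq k x z y" "phi2_ineq k y z x" if "phi2_ineq k x y z" for x y z
    using that by (simp_all add: phi2_ineq_def algebra_simps)
  fix x y z :: complex
  assume x: "cmod x \<le> 1" and y: "cmod y \<le> 1" and "cmod z \<le> 1"
    and circle: "\<And>w. cmod w = 1 \<Longrightarrow> phi2_ineq k x y w"
  have "k \<le> cmod (of_real k - x * y) + cmod (x * y)"
    using norm_triangle_ineq[of "of_real k - x * y" "x * y"] \<open>k > 3\<close> by simp
  moreover have "cmod (x * y) \<le> 1" using x y by (simp add: norm_mult mult_le_one)
  moreover have "cmod (x + y) \<le> 2" using norm_triangle_ineq[of x y] x y by simp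
  ultimately have "cmod (x + y) < cmod (of_real k - x * y)"
    using \<open>k > 3\<close> by simp
  from norm_affine_le_on_closed_disc[OF this _ \<open>cmod z \<le> 1\<close>, of "of_real k * x * y - 1" "x + y"]
  show "phi2_ineq k x y z"
    using circle by (simp add: phi2_ineq_def algebra_simps)
qed (use assms phi2_ineq_torus in auto)

lemma Gamma3_nonempty: "Gamma3 \<noteq> {}"
proof -
  have "(0 + 0 + 0, 0 * 0 + 0 * 0 + 0 * 0, 0 * 0 * 0) \<in> Gamma3"
    unfolding Gamma3_def by (intro CollectI exI[of _ 0]) simp
  then show ?thesis by blast
qed

lemma Gamma3_bounds:
  assumes "(s1, s2, p) \<in> Gamma3"
  shows "cmod s1 \<le> 3" and "cmod s2 \<le> 3"
proof -
  obtain z1 z2 z3 where z: "cmod z1 \<le> 1" "cmod z2 \<le> 1" "cmod z3 \<le> 1"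
    and "s1 = z1 + z2 + z3" "s2 = z1 * z2 + z2 * z3 + z3 * z1"
    using assms unfolding Gamma3_def by blast
  moreover have "cmod (z1 * z2) \<le> 1" "cmod (z2 * z3) \<le> 1" "cmod (z3 * z1) \<le> 1"
    using z by (auto simp: norm_mult mult_le_one)
  moreover have "cmod (x + y + w) \<le> cmod x + cmod y + cmod w" for x y w :: complex
    by (meson add_right_mono norm_triangle_ineq order_trans)
  ultimately show "cmod s1 \<le> 3" "cmod s2 \<le> 3"
    by (smt (verit))+
qed

lemma Gamma3_phi_scalar:
  assumes "(s1, s2, p) \<in> Gamma3" and "cmod \<alpha> \<le> 1" and "k > 3"
  shows "cmod (of_real k * \<alpha> ^ 3 * p - \<alpha> ^ 2 * s2) \<le> cmod (of_real k - \<alpha> * s1)"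
    and "cmod (of_real k * \<alpha> ^ 3 * p - \<alpha> * s1) \<le> cmod (of_real k - \<alpha> ^ 2 * s2)"
proof -
  obtain z1 z2 z3 where z: "cmod z1 \<le> 1" "cmod z2 \<le> 1" "cmod z3 \<le> 1"
    and s: "s1 = z1 + z2 + z3" "s2 = z1 * z2 + z2 * z3 + z3 * z1" "p = z1 * z2 * z3"
    using assms(1) unfolding Gamma3_def by blast
  have "cmod (\<alpha> * z1) \<le> 1" "cmod (\<alpha> * z2) \<le> 1" "cmod (\<alpha> * z3) \<le> 1"
    using z assms(2) by (auto simp: norm_mult mult_le_one)
  from phi1_ineq_polydisc[OF \<open>k > 3\<close> this] phi2_ineq_polydisc[OF \<open>k > 3\<close> this]
  show "cmod (of_real k * \<alpha> ^ 3 * p - \<alpha> ^ 2 * s2) \<le> cmod (of_real k - \<alpha> * s1)"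
    "cmod (of_real k * \<alpha> ^ 3 * p - \<alpha> * s1) \<le> cmod (of_real k - \<alpha> ^ 2 * s2)"
    unfolding phi1_ineq_def phi2_ineq_def s by (simp_all add: algebra_simps power2_eq_square power3_eq_cube)
qed

section \<open>Polynomials in operators and truncated Neumann series\<close>

lemma bounded_op_linear:
  assumes "bounded_op T"
  shows "T (x + y) = T x + T y" and "T (x - y) = T x - T y" and "T 0 = 0"
    and "T (scaleC c x) = scaleC c (T x)" and "T (sum f A) = (\<Sum>i\<in>A. T (f i))"
  using assms bounded_linear.linear[of T]
  by (auto simp: bounded_op_def linear_add linear_diff linear_0 linear_sum)

lemma bounded_op_id: "bounded_op id"
  by (simp add: bounded_op_def bounded_linear_ident[unfolded id_def[symmetric]])

lemma bounded_op_comp: "bounded_op T \<Longrightarrow> bounded_op U \<Longrightarrow> bounded_op (T \<circ> U)"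
  unfolding bounded_op_def by (auto simp: o_def intro: bounded_linear_compose)

lemma bounded_op_funpow: "bounded_op T \<Longrightarrow> bounded_op (T ^^ n)"
  by (induction n) (auto simp: bounded_op_id bounded_op_comp)

lemma bounded_linear_scaleC: "bounded_linear (scaleC a)"
proof (rule bounded_linear_intro[where K = "cmod a"])
  show "scaleC a (scaleR r x) = scaleR r (scaleC a x)" for r x
    by (simp flip: scaleC_of_real add: scaleC_scaleC mult.commute)
qed (simp_all add: scaleC_add_right norm_scaleC mult.commute)

lemma bounded_op_scale_op: "bounded_op T \<Longrightarrow> bounded_op (scale_op a T)"
  unfolding bounded_op_def scale_op_def[abs_def]
  by (auto intro: bounded_linear_compose[OF bounded_linear_scaleC, unfolded o_def]
      simp: scaleC_scaleC mult.commute)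

lemma bounded_op_op_comb: "bounded_op T \<Longrightarrow> bounded_op U \<Longrightarrow> bounded_op (op_comb k T U)"
  unfolding bounded_op_def op_comb_def[abs_def]
  by (auto intro!: bounded_linear_sub bounded_linear_compose[OF bounded_linear_scaleC, unfolded o_def]
      simp: scaleC_diff_right scaleC_scaleC mult.commute)

lemma op_comb_scale_op:
  "op_comb k (scale_op a T) (scale_op b U) x = scaleC (k * a) (T x) + scaleC (- b) (U x)"
  by (simp add: op_comb_def scale_op_def scaleC_scaleC scaleC_minus_left)

lemma bounded_op_sum: "(\<And>i. i \<in> A \<Longrightarrow> bounded_op (F i)) \<Longrightarrow> bounded_op (\<lambda>x. \<Sum>i\<in>A. F i x)"
  unfolding bounded_op_def by (auto intro!: bounded_linear_sum simp: scaleC_sum_right)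

definition poly1 :: "(nat \<Rightarrow> complex) \<Rightarrow> nat \<Rightarrow> complex \<Rightarrow> complex" where
  "poly1 a N z = (\<Sum>i\<le>N. a i * z ^ i)"

definition poly1_op :: "(nat \<Rightarrow> complex) \<Rightarrow> nat \<Rightarrow> ('a::complex_hilbert \<Rightarrow> 'a) \<Rightarrow> 'a \<Rightarrow> 'a" where
  "poly1_op a N T x = (\<Sum>i\<le>N. scaleC (a i) ((T ^^ i) x))"

lemma bounded_op_poly1_op: "bounded_op T \<Longrightarrow> bounded_op (poly1_op a N T)"
  unfolding poly1_op_def[abs_def]
  by (intro bounded_op_sum bounded_op_scale_op[unfolded scale_op_def[abs_def]] bounded_op_funpow)

lemma poly1_op_commute:
  assumes "bounded_op U" and "U \<circ> T = T \<circ> U"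
  shows "U (poly1_op a N T x) = poly1_op a N T (U x)"
proof -
  have "U ((T ^^ i) x) = (T ^^ i) (U x)" for i
    using assms(2) by (induction i) (simp_all, metis comp_apply)
  then show ?thesis
    by (simp add: poly1_op_def bounded_op_linear[OF assms(1)])
qed

lemma poly1_monomial: "m \<le> N \<Longrightarrow> poly1 (\<lambda>i. if i = m then c else 0) N z = c * z ^ m"
  by (simp add: poly1_def if_distrib[of "\<lambda>t. t * _"] cong: if_cong)

lemma poly1_op_monomial:
  "m \<le> N \<Longrightarrow> poly1_op (\<lambda>i. if i = m then c else 0) N T x = scaleC c ((T ^^ m) x)"
  by (simp add: poly1_op_def if_distrib[of "\<lambda>t. scaleC t _"] cong: if_cong)

lemma poly1_zero [simp]: "poly1 (\<lambda>_. 0) N z = 0"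
  by (simp add: poly1_def)

lemma poly1_op_zero [simp]: "poly1_op (\<lambda>_. 0) N T x = 0"
  by (simp add: poly1_op_def)

lemma poly3_tensor:
  "poly3 (\<lambda>i j l. a i * b j * e l) N (z1, z2, z3) = poly1 a N z1 * poly1 b N z2 * poly1 e N z3"
  unfolding poly3_def poly1_def
  by (simp add: sum_distrib_left sum_distrib_right algebra_simps) (rule sum.swap)

lemma poly3_op_tensor:
  assumes "bounded_op A" and "bounded_op B"
  shows "poly3_op (\<lambda>i j l. a i * b j * e l) N A B C x
       = poly1_op a N A (poly1_op b N B (poly1_op e N C x))"
  unfolding poly3_op_def poly1_op_def
  by (simp add: bounded_op_linear(4,5)[OF bounded_op_funpow[OF assms(1)]]
      bounded_op_linear(4,5)[OF bounded_op_funpow[OF assms(2)]] scaleC_sum_right scaleC_scaleC mult.assoc)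

lemma poly3_add: "poly3 (\<lambda>i j l. c i j l + d i j l) N z = poly3 c N z + poly3 d N z"
  unfolding poly3_def by (cases z) (simp add: algebra_simps sum.distrib)

lemma poly3_op_add:
  "poly3_op (\<lambda>i j l. c i j l + d i j l) N A B C x = poly3_op c N A B C x + poly3_op d N A B C x"
  unfolding poly3_op_def by (simp add: scaleC_add_left sum.distrib)

lemma bounded_op_poly3_op:
  assumes "bounded_op A" "bounded_op B" "bounded_op C"
  shows "bounded_op (poly3_op c N A B C)"
proof -
  have "bounded_op (scale_op (c i j l) ((A ^^ i) \<circ> (B ^^ j) \<circ> (C ^^ l)))" for i j l
    using assms by (intro bounded_op_scale_op bounded_op_comp bounded_op_funpow)
  then show ?thesis
    unfolding poly3_op_def[abs_def] scale_op_def by (intro bounded_op_sum) simp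
qed

lemma norm_funpow_le:
  fixes T :: "'a::real_normed_vector \<Rightarrow> 'a"
  assumes "\<And>u. norm (T u) \<le> r * norm u" and "0 \<le> r"
  shows "norm ((T ^^ n) u) \<le> r ^ n * norm u"
proof (induction n)
  case (Suc n)
  have "norm (T ((T ^^ n) u)) \<le> r * (r ^ n * norm u)"
    using assms(1)[of "(T ^^ n) u"] mult_left_mono[OF Suc assms(2)] by linarith
  then show ?case by simp
qed simp

text \<open>\<open>poly1 (neumann_coeff \<beta> k) N\<close> is the \<open>N\<close>-th partial sum of the Neumann series
  of \<open>1 / (k - \<beta> s)\<close>.\<close>
definition neumann_coeff :: "complex \<Rightarrow> complex \<Rightarrow> nat \<Rightarrow> complex" where
  "neumann_coeff \<beta> k i = \<beta> ^ i / k ^ Suc i"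

lemma neumann_poly_mult:
  assumes "k \<noteq> 0"
  shows "(k - \<beta> * s) * poly1 (neumann_coeff \<beta> k) N s = 1 - (\<beta> * s / k) ^ Suc N"
proof -
  define f where "f i = (\<beta> * s / k) ^ i" for i
  have "(k - \<beta> * s) * (neumann_coeff \<beta> k i * s ^ i) = f i - f (Suc i)" for i
    using assms by (simp add: f_def neumann_coeff_def power_divide power_mult_distrib field_simps)
  then have "(k - \<beta> * s) * poly1 (neumann_coeff \<beta> k) N s = (\<Sum>i<Suc N. f i - f (Suc i))"
    by (simp only: poly1_def sum_distrib_left lessThan_Suc_atMost)
  also have "\<dots> = f 0 - f (Suc N)" by (rule sum_lessThan_telescope')
  finally show ?thesis by (simp only: f_def power_0)
qed

lemma neumann_poly_op:
  assumes "bounded_op T" and "k \<noteq> 0"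
  shows "poly1_op (neumann_coeff \<beta> k) N T (scaleC k u - scaleC \<beta> (T u))
       = u - scaleC ((\<beta> / k) ^ Suc N) ((T ^^ Suc N) u)"
proof -
  define f where "f i = scaleC ((\<beta> / k) ^ i) ((T ^^ i) u)" for i
  have "scaleC (neumann_coeff \<beta> k i) ((T ^^ i) (scaleC k u - scaleC \<beta> (T u))) = f i - f (Suc i)" for i
  proof -
    have "neumann_coeff \<beta> k i * k = (\<beta> / k) ^ i" "neumann_coeff \<beta> k i * \<beta> = (\<beta> / k) ^ Suc i"
      using assms(2) by (simp_all add: neumann_coeff_def power_divide field_simps)
    then show ?thesis
      by (simp add: f_def bounded_op_linear(2,4)[OF bounded_op_funpow[OF assms(1)]] funpow_swap1
          scaleC_diff_right scaleC_scaleC)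
  qed
  then have "poly1_op (neumann_coeff \<beta> k) N T (scaleC k u - scaleC \<beta> (T u))
      = (\<Sum>i<Suc N. f i - f (Suc i))"
    by (simp only: poly1_op_def lessThan_Suc_atMost)
  also have "\<dots> = f 0 - f (Suc N)" by (rule sum_lessThan_telescope')
  finally show ?thesis by (simp add: f_def scaleC_one del: power_Suc funpow.simps)
qed

lemma norm_neumann_poly_le:
  fixes k r :: real
  assumes "0 < k" and "cmod s \<le> r" and b: "cmod b \<le> cmod (of_real k - \<beta> * s)"
  shows "cmod (poly1 (neumann_coeff \<beta> (of_real k)) N s * b) \<le> 1 + (r * cmod \<beta> / k) ^ Suc N"
proof -
  have "cmod (poly1 (neumann_coeff \<beta> (of_real k)) N s * b)
      \<le> cmod (poly1 (neumann_coeff \<beta> (of_real k)) N s * (of_real k - \<beta> * s))"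
    using b by (simp add: norm_mult mult_left_mono)
  also have "\<dots> = cmod (1 - (\<beta> * s / of_real k) ^ Suc N)"
    using \<open>0 < k\<close> neumann_poly_mult[of "of_real k" \<beta> s N] by (simp add: mult.commute)
  also have "\<dots> \<le> 1 + cmod (\<beta> * s / of_real k) ^ Suc N"
    using norm_triangle_ineq4[of 1 "(\<beta> * s / of_real k) ^ Suc N"]
    by (simp only: norm_one norm_power)
  also have "cmod (\<beta> * s / of_real k) \<le> r * cmod \<beta> / k"
    using assms mult_left_mono[OF \<open>cmod s \<le> r\<close> norm_ge_zero[of \<beta>]]
    by (simp add: norm_mult norm_divide divide_right_mono mult.commute)
  then have "cmod (\<beta> * s / of_real k) ^ Suc N \<le> (r * cmod \<beta> / k) ^ Suc N"
    by (intro power_mono) auto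
  finally show ?thesis by simp
qed

lemma le_of_geometric_perturbation:
  fixes a b c \<rho> :: real
  assumes "0 \<le> \<rho>" "\<rho> < 1" and "\<And>N. 1 \<le> N \<Longrightarrow> a \<le> (1 + \<rho> ^ Suc N) * b + \<rho> ^ Suc N * c"
  shows "a \<le> b"
proof -
  have "(\<lambda>N. (1 + \<rho> ^ Suc N) * b + \<rho> ^ Suc N * c) \<longlonglongrightarrow> (1 + 0) * b + 0 * c"
    using LIMSEQ_Suc[OF LIMSEQ_power_zero[of \<rho>]] assms(1,2) by (intro tendsto_intros) simp_all
  then have "a \<le> (1 + 0) * b + 0 * c"
    using assms(3) by (intro tendsto_le[OF sequentially_bot _ tendsto_const]) (auto simp: eventually_sequentially)
  then show ?thesis by simp
qed

text \<open>Applying the truncated Neumann series of \<open>(k - \<beta> T)\<^sup>-\<^sup>1\<close> to \<open>B (k x - \<beta> T x)\<close>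
  returns \<open>B x\<close> up to an error of order \<open>\<rho>\<^sup>N\<close>, \<open>\<rho> = r \<bar>\<beta>\<bar> / k < 1\<close>; letting
  \<open>N \<rightarrow> \<infinity>\<close> avoids inverting any operator.\<close>
lemma norm_le_of_neumann_bounds:
  fixes k r :: real
  assumes T: "bounded_op T" and B: "bounded_op B" and comm: "T \<circ> B = B \<circ> T"
    and T_le: "\<And>u. norm (T u) \<le> r * norm u" and "0 \<le> r" and "r * cmod \<beta> < k"
    and bound: "\<And>N y. 1 \<le> N \<Longrightarrow> norm (poly1_op (neumann_coeff \<beta> (of_real k)) N T (B y))
                                 \<le> (1 + (r * cmod \<beta> / k) ^ Suc N) * norm y"
  shows "norm (B x) \<le> norm (op_comb (of_real k) id (scale_op \<beta> T) x)"
proof -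
  define \<rho> where "\<rho> = r * cmod \<beta> / k"
  define Ax where "Ax = op_comb (of_real k) id (scale_op \<beta> T) x"
  have "0 < k" using \<open>0 \<le> r\<close> \<open>r * cmod \<beta> < k\<close> by (smt (verit) mult_nonneg_nonneg norm_ge_zero)
  have "0 \<le> \<rho>" "\<rho> < 1" using \<open>0 < k\<close> \<open>0 \<le> r\<close> \<open>r * cmod \<beta> < k\<close> by (simp_all add: \<rho>_def)
  have "norm (B x) \<le> (1 + \<rho> ^ Suc N) * norm Ax + \<rho> ^ Suc N * norm (B x)" if "1 \<le> N" for N
  proof -
    have "B Ax = scaleC (of_real k) (B x) - scaleC \<beta> (T (B x))"
      using comm by (simp add: Ax_def op_comb_def scale_op_def bounded_op_linear[OF B]) (metis comp_apply)
    then have "B x - scaleC ((\<beta> / of_real k) ^ Suc N) ((T ^^ Suc N) (B x))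
        = poly1_op (neumann_coeff \<beta> (of_real k)) N T (B Ax)"
      using \<open>0 < k\<close> by (simp add: neumann_poly_op[OF T])
    moreover have "norm (scaleC ((\<beta> / of_real k) ^ Suc N) ((T ^^ Suc N) (B x))) \<le> \<rho> ^ Suc N * norm (B x)"
    proof -
      have "norm (scaleC ((\<beta> / of_real k) ^ Suc N) ((T ^^ Suc N) (B x)))
          = (cmod \<beta> / k) ^ Suc N * norm ((T ^^ Suc N) (B x))"
        using \<open>0 < k\<close> by (simp only: norm_scaleC norm_power norm_divide norm_of_real abs_of_pos)
      also have "\<dots> \<le> (cmod \<beta> / k) ^ Suc N * (r ^ Suc N * norm (B x))"
        using \<open>0 < k\<close> norm_funpow_le[OF T_le \<open>0 \<le> r\<close>, of "Suc N" "B x"]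
        by (intro mult_left_mono) simp_all
      finally have "norm (scaleC ((\<beta> / of_real k) ^ Suc N) ((T ^^ Suc N) (B x)))
          \<le> (cmod \<beta> / k) ^ Suc N * (r ^ Suc N * norm (B x))" .
      then show ?thesis by (simp add: \<rho>_def power_mult_distrib power_divide field_simps del: power_Suc)
    qed
    ultimately show ?thesis
      using bound[OF that, of Ax] norm_triangle_ineq4[of "B x - _" "- _"]
      by (smt (verit) \<rho>_def norm_minus_commute norm_triangle_sub)
  qed
  then show ?thesis
    unfolding Ax_def by (rule le_of_geometric_perturbation[OF \<open>0 \<le> \<rho>\<close> \<open>\<rho> < 1\<close>])
qed

section \<open>The von Neumann inequality for \<open>\<Gamma>\<^sub>3\<close>-contractions\<close>

context
  fixes S1 S2 P :: "'a::complex_hilbert \<Rightarrow> 'a"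
  assumes G: "gamma3_contraction S1 S2 P"
begin

lemma gamma3_contraction_bounded: "bounded_op S1" "bounded_op S2" "bounded_op P"
  using G by (auto simp: gamma3_contraction_def)

lemma gamma3_contraction_commute: "S1 \<circ> S2 = S2 \<circ> S1" "S1 \<circ> P = P \<circ> S1" "S2 \<circ> P = P \<circ> S2"
  using G by (auto simp: gamma3_contraction_def commuting3_def)

text \<open>The von Neumann inequality for polynomials is the case \<open>q = 1\<close> of the defining
  inequality for rational functions.\<close>
lemma von_neumann_poly3:
  assumes "\<And>z. z \<in> Gamma3 \<Longrightarrow> cmod (poly3 c N z) \<le> M"
  shows "norm (poly3_op c N S1 S2 P x) \<le> M * norm x"
proof -
  define e :: "nat \<Rightarrow> complex" where "e i = (if i = 0 then 1 else 0)" for i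
  define q where "q i j l = e i * e j * e l" for i j l
  have q: "poly3 q N z = 1" for z
    unfolding q_def[abs_def] e_def by (cases z) (simp add: poly3_tensor poly1_monomial)
  have q_op: "poly3_op q N S1 S2 P = id"
    unfolding q_def[abs_def] e_def
    by (rule ext) (simp add: poly3_op_tensor[OF gamma3_contraction_bounded(1,2)]
        poly1_op_monomial scaleC_one)
  have "onorm (poly3_op c N S1 S2 P \<circ> inv (poly3_op q N S1 S2 P))
      \<le> (SUP z\<in>Gamma3. cmod (poly3 c N z / poly3 q N z))"
    using G q unfolding gamma3_contraction_def by (metis one_neq_zero)
  then have "onorm (poly3_op c N S1 S2 P) \<le> (SUP z\<in>Gamma3. cmod (poly3 c N z / poly3 q N z))"
    by (simp add: q_op)
  also have "\<dots> \<le> M"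
    using assms q by (intro cSUP_least[OF Gamma3_nonempty]) simp
  finally have "onorm (poly3_op c N S1 S2 P) \<le> M" .
  moreover have "bounded_linear (poly3_op c N S1 S2 P)"
    using bounded_op_poly3_op[OF gamma3_contraction_bounded] by (simp add: bounded_op_def)
  ultimately show ?thesis
    by (meson norm_ge_zero mult_right_mono onorm order_trans)
qed

lemma von_neumann_separable:
  assumes "\<And>s1 s2 p. (s1, s2, p) \<in> Gamma3 \<Longrightarrow>
      cmod (poly1 a N s1 * poly1 b N s2 * poly1 e N p + poly1 a' N s1 * poly1 b' N s2 * poly1 e' N p) \<le> M"
  shows "norm (poly1_op a N S1 (poly1_op b N S2 (poly1_op e N P x))
             + poly1_op a' N S1 (poly1_op b' N S2 (poly1_op e' N P x))) \<le> M * norm x"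
proof -
  have "cmod (poly3 (\<lambda>i j l. a i * b j * e l + a' i * b' j * e' l) N z) \<le> M" if "z \<in> Gamma3" for z
    using that assms by (cases z) (simp only: poly3_add poly3_tensor)
  from von_neumann_poly3[OF this] show ?thesis
    by (simp only: poly3_op_add poly3_op_tensor[OF gamma3_contraction_bounded(1,2)])
qed

lemma norm_S1_le: "norm (S1 x) \<le> 3 * norm x"
  using von_neumann_separable[of "\<lambda>i. if i = 1 then 1 else 0" 1 "\<lambda>i. if i = 0 then 1 else 0"
      "\<lambda>i. if i = 0 then 1 else 0" "\<lambda>_. 0" "\<lambda>_. 0" "\<lambda>_. 0" 3 x]
  by (simp add: poly1_monomial poly1_op_monomial scaleC_one Gamma3_bounds)

lemma norm_S2_le: "norm (S2 x) \<le> 3 * norm x"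
  using von_neumann_separable[of "\<lambda>i. if i = 0 then 1 else 0" 1 "\<lambda>i. if i = 1 then 1 else 0"
      "\<lambda>i. if i = 0 then 1 else 0" "\<lambda>_. 0" "\<lambda>_. 0" "\<lambda>_. 0" 3 x]
  by (simp add: poly1_monomial poly1_op_monomial scaleC_one Gamma3_bounds)

lemma von_neumann_S1_pencil:
  assumes "1 \<le> N"
    and "\<And>s1 s2 p. (s1, s2, p) \<in> Gamma3 \<Longrightarrow> cmod (poly1 a N s1 * (u * p + v * s2)) \<le> M"
  shows "norm (poly1_op a N S1 (scaleC u (P y) + scaleC v (S2 y))) \<le> M * norm y"
  using von_neumann_separable[of a N "\<lambda>i. if i = 0 then 1 else 0" "\<lambda>i. if i = 1 then u else 0"
      a "\<lambda>i. if i = 1 then v else 0" "\<lambda>i. if i = 0 then 1 else 0" M y] assms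
  by (simp add: poly1_monomial poly1_op_monomial scaleC_one algebra_simps
      bounded_op_linear(1)[OF bounded_op_poly1_op[OF gamma3_contraction_bounded(1)]])

lemma von_neumann_S2_pencil:
  assumes "1 \<le> N"
    and "\<And>s1 s2 p. (s1, s2, p) \<in> Gamma3 \<Longrightarrow> cmod (poly1 a N s2 * (u * p + v * s1)) \<le> M"
  shows "norm (poly1_op a N S2 (scaleC u (P y) + scaleC v (S1 y))) \<le> M * norm y"
proof -
  have "S1 (poly1_op a N S2 y) = poly1_op a N S2 (S1 y)"
    using gamma3_contraction_bounded(1) gamma3_contraction_commute(1) by (rule poly1_op_commute)
  then show ?thesis
    using von_neumann_separable[of "\<lambda>i. if i = 0 then 1 else 0" N a "\<lambda>i. if i = 1 then u else 0"
        "\<lambda>i. if i = 1 then v else 0" a "\<lambda>i. if i = 0 then 1 else 0" M y] assms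
    by (simp add: poly1_monomial poly1_op_monomial scaleC_one algebra_simps
        bounded_op_linear(1,4)[OF bounded_op_poly1_op[OF gamma3_contraction_bounded(2)]])
qed

lemma norm_Phi1_pencil_le:
  assumes "k > 3" and "cmod \<alpha> \<le> 1"
  shows "norm (op_comb (of_real k) (scale_op (\<alpha> ^ 3) P) (scale_op (\<alpha> ^ 2) S2) x)
       \<le> norm (op_comb (of_real k) id (scale_op \<alpha> S1) x)"
proof (rule norm_le_of_neumann_bounds[where r = 3])
  show "bounded_op (op_comb (of_real k) (scale_op (\<alpha> ^ 3) P) (scale_op (\<alpha> ^ 2) S2))"
    by (intro bounded_op_op_comb bounded_op_scale_op gamma3_contraction_bounded)
  show "S1 \<circ> op_comb (of_real k) (scale_op (\<alpha> ^ 3) P) (scale_op (\<alpha> ^ 2) S2)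
      = op_comb (of_real k) (scale_op (\<alpha> ^ 3) P) (scale_op (\<alpha> ^ 2) S2) \<circ> S1"
    using gamma3_contraction_commute
    by (auto simp: op_comb_scale_op bounded_op_linear[OF gamma3_contraction_bounded(1)] fun_eq_iff)
  show "3 * cmod \<alpha> < k" using assms by simp
  fix N :: nat and y assume "1 \<le> N"
  show "norm (poly1_op (neumann_coeff \<alpha> (of_real k)) N S1
          (op_comb (of_real k) (scale_op (\<alpha> ^ 3) P) (scale_op (\<alpha> ^ 2) S2) y))
        \<le> (1 + (3 * cmod \<alpha> / k) ^ Suc N) * norm y"
    unfolding op_comb_scale_op
    using \<open>1 \<le> N\<close> Gamma3_bounds(1) Gamma3_phi_scalar(1)[OF _ assms(2,1)] \<open>k > 3\<close>
    by (intro von_neumann_S1_pencil norm_neumann_poly_le) (auto simp: algebra_simps)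
qed (use gamma3_contraction_bounded norm_S1_le in auto)

lemma norm_Phi2_pencil_le:
  assumes "k > 3" and "cmod \<alpha> \<le> 1"
  shows "norm (op_comb (of_real k) (scale_op (\<alpha> ^ 3) P) (scale_op \<alpha> S1) x)
       \<le> norm (op_comb (of_real k) id (scale_op (\<alpha> ^ 2) S2) x)"
proof (rule norm_le_of_neumann_bounds[where r = 3])
  show "bounded_op (op_comb (of_real k) (scale_op (\<alpha> ^ 3) P) (scale_op \<alpha> S1))"
    by (intro bounded_op_op_comb bounded_op_scale_op gamma3_contraction_bounded)
  show "S2 \<circ> op_comb (of_real k) (scale_op (\<alpha> ^ 3) P) (scale_op \<alpha> S1)
      = op_comb (of_real k) (scale_op (\<alpha> ^ 3) P) (scale_op \<alpha> S1) \<circ> S2"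
    using gamma3_contraction_commute
    by (auto simp: op_comb_scale_op bounded_op_linear[OF gamma3_contraction_bounded(2)] fun_eq_iff)
  have "cmod (\<alpha> ^ 2) \<le> 1" using assms by (simp add: norm_power power_le_one)
  then show "3 * cmod (\<alpha> ^ 2) < k" using assms by simp
  fix N :: nat and y assume "1 \<le> N"
  show "norm (poly1_op (neumann_coeff (\<alpha> ^ 2) (of_real k)) N S2
          (op_comb (of_real k) (scale_op (\<alpha> ^ 3) P) (scale_op \<alpha> S1) y))
        \<le> (1 + (3 * cmod (\<alpha> ^ 2) / k) ^ Suc N) * norm y"
    unfolding op_comb_scale_op
    using \<open>1 \<le> N\<close> Gamma3_bounds(2) Gamma3_phi_scalar(2)[OF _ assms(2,1)] \<open>k > 3\<close>
    by (intro von_neumann_S2_pencil norm_neumann_poly_le) (auto simp: algebra_simps)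
qed (use gamma3_contraction_bounded norm_S2_le in auto)

end

theorem proposition4p4:
  fixes S1 S2 P :: "'a::complex_hilbert \<Rightarrow> 'a"
    and \<alpha> :: complex and k :: real
  assumes "gamma3_contraction S1 S2 P"
    and "cmod \<alpha> \<le> 1"
    and "k \<ge> 3"
  shows "positive_op (Phi1 k (scale_op \<alpha> S1) (scale_op (\<alpha>^2) S2) (scale_op (\<alpha>^3) P))
       \<and> positive_op (Phi2 k (scale_op \<alpha> S1) (scale_op (\<alpha>^2) S2) (scale_op (\<alpha>^3) P))"
proof -
  note bounded = gamma3_contraction_bounded[OF assms(1)]
  have "bounded_op (scale_op \<alpha> S1)" "bounded_op (scale_op (\<alpha>^2) S2)" "bounded_op (scale_op (\<alpha>^3) P)"
    using bounded by (simp_all add: bounded_op_scale_op)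
  note ops = bounded_op_op_comb[OF bounded_op_id this(1)] bounded_op_op_comb[OF bounded_op_id this(2)]
    bounded_op_op_comb[OF this(3) this(2)] bounded_op_op_comb[OF this(3) this(1)]
  have "norm (op_comb (of_real k) (scale_op (\<alpha>^3) P) (scale_op (\<alpha>^2) S2) x)
      \<le> norm (op_comb (of_real k) id (scale_op \<alpha> S1) x)" for x
    by (rule norm_op_comb_le_from_right, rule norm_Phi1_pencil_le[OF assms(1)]) (use assms in auto)
  then have "positive_op (Phi1 k (scale_op \<alpha> S1) (scale_op (\<alpha>^2) S2) (scale_op (\<alpha>^3) P))"
    unfolding Phi1_def[abs_def] by (intro positive_op_adj_diff ops)
  moreover have "norm (op_comb (of_real k) (scale_op (\<alpha>^3) P) (scale_op \<alpha> S1) x)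
      \<le> norm (op_comb (of_real k) id (scale_op (\<alpha>^2) S2) x)" for x
    by (rule norm_op_comb_le_from_right, rule norm_Phi2_pencil_le[OF assms(1)]) (use assms in auto)
  then have "positive_op (Phi2 k (scale_op \<alpha> S1) (scale_op (\<alpha>^2) S2) (scale_op (\<alpha>^3) P))"
    unfolding Phi2_def[abs_def] by (intro positive_op_adj_diff ops)
  ultimately show ?thesis ..
qed

end
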